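(* Let $G=\mathbf{PGO}_8$ be the split adjoint group of type ${\rm D}_4$. Then $\operatorname{Sdec}(G)=\operatorname{Dec}(G)$, i.e. every semi-decomposable degree $3$ invariant of $G$ is decomposable.
   Context: For a split semisimple group $G=G^{sc}/\boldsymbol{\mu}$ let $T^*_{sc}$ be the weight lattice, $T^*\subseteq T^*_{sc}$ the characters trivial on $\boldsymbol{\mu}$, $W$ the Weyl group. Let $c_2\colon\mathbb{Z}[T^*_{sc}]\to S^2(T^*_{sc})$ be the additive map obtained by composing the ring homomorphism $\mathbb{Z}[T^*_{sc}]\to S^*(T^*_{sc})/S^{\ge3}(T^*_{sc})$, $e^{-\omega}\mapsto1-\omega$ (so $e^{\omega}\mapsto1+\omega+\omega^2$) for fundamental weights $\omega$, with projection to degree 2. $\operatorname{Dec}(G)=c_2(\mathbb{Z}[T^*]^W)$ (decomposable invariants); $I^W_{sc}$ is the ideal of $\mathbb{Z}[T^*_{sc}]$ generated by the $W$-invariant elements of the augmentation ideal (kernel of $e^\lambda\mapsto1$); $\operatorname{Sdec}(G)=c_2(\mathbb{Z}[T^*]\cap I^W_{sc})$ (semi-decomposable invariants). *)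

theory Defs
  imports "HOL-Library.Poly_Mapping" "HOL-Library.Product_Plus"
begin

text \<open>Weights are written in the basis of fundamental
weights w1,w2,w3,w4 (node 2 is the central node of the Dynkin diagram), so the
weight lattice T*_sc is Z^4. The group ring Z[T*_sc] is the ring of finitely
supported functions T*_sc \<Rightarrow> int with convolution product (Poly_Mapping).\<close>

type_synonym wt = "int \<times> int \<times> int \<times> int"
type_synonym grpring = "wt \<Rightarrow>\<^sub>0 int"

definition coord :: "wt \<Rightarrow> nat \<Rightarrow> int" where
  "coord l i = (case l of (a,b,c,d) \<Rightarrow>
     (if i = 1 then a else if i = 2 then b else if i = 3 then c else if i = 4 then d else 0))"

definition wscale :: "int \<Rightarrow> wt \<Rightarrow> wt" where
  "wscale k l = (case l of (a,b,c,d) \<Rightarrow> (k*a, k*b, k*c, k*d))"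

definition wsub :: "wt \<Rightarrow> wt \<Rightarrow> wt" where
  "wsub l m = (case l of (a,b,c,d) \<Rightarrow> case m of (a',b',c',d') \<Rightarrow> (a-a', b-b', c-c', d-d'))"

text \<open>Simple roots of D4 in fundamental-weight coordinates (rows of the Cartan matrix).\<close>
definition simple_root :: "nat \<Rightarrow> wt" where
  "simple_root i = (if i = 1 then (2,-1,0,0) else if i = 2 then (-1,2,-1,-1)
     else if i = 3 then (0,-1,2,0) else (0,-1,0,2))"

definition simple_refl :: "nat \<Rightarrow> wt \<Rightarrow> wt" where
  "simple_refl i l = wsub l (wscale (coord l i) (simple_root i))"

inductive_set weyl :: "(wt \<Rightarrow> wt) set" where
  weyl_id: "id \<in> weyl"
| weyl_step: "w \<in> weyl \<Longrightarrow> i \<in> {1,2,3,4} \<Longrightarrow> simple_refl i \<circ> w \<in> weyl"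

text \<open>T* for G = PGO_8 (adjoint): characters trivial on the full centre = root lattice.\<close>
definition root_lattice :: "wt set" where
  "root_lattice = {l. \<exists>c1 c2 c3 c4 :: int.
     l = wscale c1 (simple_root 1) + wscale c2 (simple_root 2)
       + wscale c3 (simple_root 3) + wscale c4 (simple_root 4)}"

definition W_invariant :: "grpring \<Rightarrow> bool" where
  "W_invariant f \<longleftrightarrow> (\<forall>w\<in>weyl. \<forall>l. Poly_Mapping.lookup f (w l) = Poly_Mapping.lookup f l)"

definition aug :: "grpring \<Rightarrow> int" where
  "aug f = (\<Sum>l\<in>Poly_Mapping.keys f. Poly_Mapping.lookup f l)"

inductive_set IW_sc :: "grpring set" where
  IW_zero: "0 \<in> IW_sc"
| IW_gen: "W_invariant h \<Longrightarrow> aug h = 0 \<Longrightarrow> g * h \<in> IW_sc"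
| IW_add: "a \<in> IW_sc \<Longrightarrow> b \<in> IW_sc \<Longrightarrow> a + b \<in> IW_sc"

text \<open>Symmetric algebra S*(T*_sc) = Z[x1,x2,x3,x4] (x_i = w_i), polynomials as
finitely supported functions from exponent vectors to int.\<close>
type_synonym mon = "nat \<times> nat \<times> nat \<times> nat"
type_synonym spoly = "mon \<Rightarrow>\<^sub>0 int"

definition unit_mon :: "nat \<Rightarrow> mon" where
  "unit_mon i = (if i = 1 then (1,0,0,0) else if i = 2 then (0,1,0,0)
     else if i = 3 then (0,0,1,0) else (0,0,0,1))"

definition X :: "nat \<Rightarrow> spoly" where
  "X i = Poly_Mapping.single (unit_mon i) 1"

definition mdeg :: "mon \<Rightarrow> nat" where
  "mdeg m = (case m of (a,b,c,d) \<Rightarrow> a+b+c+d)"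

text \<open>Image of e^{a w_i}: e^{-w_i} \<mapsto> 1 - x_i, e^{w_i} \<mapsto> 1 + x_i + x_i^2
(modulo degree \<ge> 3, which does not affect the degree-2 part).\<close>
definition chern_factor :: "int \<Rightarrow> nat \<Rightarrow> spoly" where
  "chern_factor a i = (if a \<ge> 0 then (1 + X i + X i ^ 2) ^ nat a else (1 - X i) ^ nat (- a))"

definition chern_img :: "wt \<Rightarrow> spoly" where
  "chern_img l = (\<Prod>i\<in>{1,2,3,4}. chern_factor (coord l i) i)"

text \<open>c_2 : Z[T*_sc] \<rightarrow> S^2(T*_sc), degree-2 element given by its coefficients
on degree-2 monomials (0 on all other monomials).\<close>
definition c2 :: "grpring \<Rightarrow> (mon \<Rightarrow> int)" where
  "c2 f = (\<lambda>m. if mdeg m = 2 then (\<Sum>l\<in>Poly_Mapping.keys f. Poly_Mapping.lookup f l * Poly_Mapping.lookup (chern_img l) m) else 0)"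

definition Dec :: "(mon \<Rightarrow> int) set" where
  "Dec = c2 ` {f. Poly_Mapping.keys f \<subseteq> root_lattice \<and> W_invariant f}"

definition Sdec :: "(mon \<Rightarrow> int) set" where
  "Sdec = c2 ` {f. Poly_Mapping.keys f \<subseteq> root_lattice \<and> f \<in> IW_sc}"

end

theory Submission
  imports Defs
begin

text \<open>
Dec \<subseteq> Sdec because a W-invariant f differs from f - aug(f)\<sqdot>e^0, which lies in I^W_sc, only in
degree 0. For the converse, pair group-ring elements with functions on the weight lattice. For a
W-invariant h the simple reflections relate the pairings of h with the quadratic coordinate
functions through the Cartan matrix, and shifting the argument only adds affine terms, which h
kills when aug h = 0; hence c2(F) = \<kappa>\<sqdot>q for every F in I^W_sc, where q is the invariant quadratic
form. The decomposable invariants include 4q, realised by \<Sigma>_{roots} e^\<alpha> - \<Sigma>_{W\<sqdot>2\<omega>1} e^\<mu>, so it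
remains to show 4 | \<kappa>. The function \<psi>(l) = 4(\<theta>,l) + [l in the root lattice]\<sqdot>4(l,l) pairs with F to
16\<kappa> when F is supported on the root lattice, while for generators g\<sqdot>h of I^W_sc every translate
\<psi>(x + \<sqdot>) pairs with h to a multiple of 64: in orthonormal coordinates W acts by permutations and
even sign changes, and folding along these symmetries coset by coset of the root lattice yields
the factor 64.
\<close>

(* Keep the index 1 as a numeral, so that facts about index 1 still apply after simplification. *)
declare One_nat_def [simp del]

section \<open>The degree-two part of the Chern map\<close>

lemma mdeg_add: "mdeg (m + n) = mdeg m + mdeg n"
  by (cases m; cases n) (simp add: mdeg_def)

definition agree_deg2 :: "spoly \<Rightarrow> spoly \<Rightarrow> bool" where
  "agree_deg2 P Q \<longleftrightarrow> (\<forall>m. mdeg m \<le> 2 \<longrightarrow> Poly_Mapping.lookup P m = Poly_Mapping.lookup Q m)"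

lemma agree_deg2_refl [simp]: "agree_deg2 P P"
  by (simp add: agree_deg2_def)

lemma agree_deg2_trans [trans]: "agree_deg2 P Q \<Longrightarrow> agree_deg2 Q R \<Longrightarrow> agree_deg2 P R"
  by (simp add: agree_deg2_def)

lemma agree_deg2D: "agree_deg2 P Q \<Longrightarrow> mdeg m \<le> 2 \<Longrightarrow> Poly_Mapping.lookup P m = Poly_Mapping.lookup Q m"
  unfolding agree_deg2_def by blast

lemma agree_deg2_mult_right:
  assumes "agree_deg2 P P'"
  shows "agree_deg2 (P * Q) (P' * Q)"
  unfolding agree_deg2_def
proof (intro allI impI)
  fix m :: mon assume m: "mdeg m \<le> 2"
  have "Poly_Mapping.lookup P l * (\<Sum>q. Poly_Mapping.lookup Q q when m = l + q)
      = Poly_Mapping.lookup P' l * (\<Sum>q. Poly_Mapping.lookup Q q when m = l + q)" for l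
  proof (cases "mdeg l \<le> 2")
    case True
    then have "Poly_Mapping.lookup P l = Poly_Mapping.lookup P' l"
      using assms unfolding agree_deg2_def by blast
    then show ?thesis by simp
  next
    case False
    then have "m \<noteq> l + q" for q using m by (auto simp: mdeg_add)
    then show ?thesis by simp
  qed
  then have "(\<lambda>l. Poly_Mapping.lookup P l * (\<Sum>q. Poly_Mapping.lookup Q q when m = l + q))
      = (\<lambda>l. Poly_Mapping.lookup P' l * (\<Sum>q. Poly_Mapping.lookup Q q when m = l + q))"
    by (rule ext)
  then show "Poly_Mapping.lookup (P * Q) m = Poly_Mapping.lookup (P' * Q) m"
    unfolding lookup_mult by (rule arg_cong)
qed

lemma agree_deg2_mult:
  assumes "agree_deg2 P P'" "agree_deg2 Q Q'"
  shows "agree_deg2 (P * Q) (P' * Q')"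
proof -
  have "agree_deg2 (P * Q) (P' * Q)" by (rule agree_deg2_mult_right[OF assms(1)])
  also have "agree_deg2 (Q * P') (Q' * P')" by (rule agree_deg2_mult_right[OF assms(2)])
  then have "agree_deg2 (P' * Q) (P' * Q')" by (simp add: mult.commute)
  finally show ?thesis .
qed

lemma agree_deg2_prod:
  "finite I \<Longrightarrow> (\<And>i. i \<in> I \<Longrightarrow> agree_deg2 (f i) (g i)) \<Longrightarrow> agree_deg2 (\<Prod>i\<in>I. f i) (\<Prod>i\<in>I. g i)"
  by (induction I rule: finite_induct) (simp_all add: agree_deg2_mult)

definition tri :: "int \<Rightarrow> int" where
  "tri a = a * (a + 1) div 2"

lemma tri_double: "2 * tri a = a * (a + 1)"
  unfolding tri_def by simp

lemma tri_add: "tri (a + b) = tri a + tri b + a * b"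
  using tri_double[of a] tri_double[of b] tri_double[of "a + b"] by (simp add: algebra_simps)

text \<open>The truncation to degree 2 of (1 + x_i + x_i^2)^a, the image of e^{a \<omega>_i}.\<close>
definition exp_trunc :: "nat \<Rightarrow> int \<Rightarrow> spoly" where
  "exp_trunc i a = 1 + Poly_Mapping.single (unit_mon i) a
     + Poly_Mapping.single (unit_mon i + unit_mon i) (tri a)"

lemma exp_trunc_add: "agree_deg2 (exp_trunc i a * exp_trunc i b) (exp_trunc i (a + b))"
  unfolding agree_deg2_def
proof (intro allI impI)
  fix m :: mon assume m: "mdeg m \<le> 2"
  let ?u = "unit_mon i"
  have d: "mdeg ?u = 1" "mdeg (?u + ?u) = 2" "mdeg (0::mon) = 0"
    by (simp_all add: mdeg_add) (simp_all add: unit_mon_def mdeg_def zero_prod_def)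
  then have "m \<noteq> ?u + (?u + ?u)" "m \<noteq> ?u + ?u + ?u" "m \<noteq> ?u + ?u + (?u + ?u)"
    using m by (auto simp: mdeg_add)
  moreover have "?u \<noteq> 0" "?u + ?u \<noteq> 0" "?u + ?u \<noteq> ?u"
    using d by (auto dest: arg_cong[where f = mdeg])
  ultimately show "Poly_Mapping.lookup (exp_trunc i a * exp_trunc i b) m
      = Poly_Mapping.lookup (exp_trunc i (a + b)) m"
    unfolding exp_trunc_def
    by (simp add: distrib_left distrib_right mult_single lookup_add lookup_single when_def tri_add)
qed

lemma exp_trunc_zero: "exp_trunc i 0 = 1"
  by (simp add: exp_trunc_def tri_def)

lemma exp_trunc_power: "agree_deg2 (exp_trunc i a ^ n) (exp_trunc i (int n * a))"
proof (induction n)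
  case 0
  show ?case by (simp add: exp_trunc_zero)
next
  case (Suc n)
  have "agree_deg2 (exp_trunc i a ^ Suc n) (exp_trunc i a * exp_trunc i (int n * a))"
    unfolding power_Suc by (rule agree_deg2_mult[OF agree_deg2_refl Suc.IH])
  also have "agree_deg2 \<dots> (exp_trunc i (a + int n * a))"
    by (rule exp_trunc_add)
  finally show ?case by (simp add: algebra_simps)
qed

lemma chern_factor_agree_deg2: "agree_deg2 (chern_factor a i) (exp_trunc i a)"
proof -
  have "1 + X i + X i ^ 2 = exp_trunc i 1" "1 - X i = exp_trunc i (-1)"
    by (simp_all add: exp_trunc_def X_def tri_def power2_eq_square mult_single single_uminus)
  then show ?thesis
    using exp_trunc_power[of i 1 "nat a"] exp_trunc_power[of i "-1" "nat (- a)"]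
    by (cases "0 \<le> a") (simp_all add: chern_factor_def)
qed

definition chern_trunc :: "wt \<Rightarrow> spoly" where
  "chern_trunc l = (\<Prod>i\<in>{1,2,3,4}. exp_trunc i (coord l i))"

lemma chern_img_agree_deg2: "agree_deg2 (chern_img l) (chern_trunc l)"
  unfolding chern_img_def chern_trunc_def by (rule agree_deg2_prod) (simp_all add: chern_factor_agree_deg2)

definition c2_coeff :: "mon \<Rightarrow> wt \<Rightarrow> int" where
  "c2_coeff m l = Poly_Mapping.lookup (chern_trunc l) m"

lemma c2_coeff_tuple:
  "c2_coeff (2,0,0,0) (a,b,c,d) = tri a" "c2_coeff (0,2,0,0) (a,b,c,d) = tri b"
  "c2_coeff (0,0,2,0) (a,b,c,d) = tri c" "c2_coeff (0,0,0,2) (a,b,c,d) = tri d"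
  "c2_coeff (1,1,0,0) (a,b,c,d) = a * b" "c2_coeff (1,0,1,0) (a,b,c,d) = a * c"
  "c2_coeff (1,0,0,1) (a,b,c,d) = a * d" "c2_coeff (0,1,1,0) (a,b,c,d) = b * c"
  "c2_coeff (0,1,0,1) (a,b,c,d) = b * d" "c2_coeff (0,0,1,1) (a,b,c,d) = c * d"
  by (simp_all add: c2_coeff_def chern_trunc_def exp_trunc_def coord_def unit_mon_def
      distrib_left distrib_right mult_single lookup_add lookup_single when_def lookup_one zero_prod_def)

lemma mdeg_eq_2_enum:
  assumes "mdeg m = 2"
  shows "m \<in> {(2,0,0,0),(0,2,0,0),(0,0,2,0),(0,0,0,2),(1,1,0,0),(1,0,1,0),(1,0,0,1),(0,1,1,0),(0,1,0,1),(0,0,1,1)}"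
proof -
  obtain a b c d where m: "m = (a,b,c,d)" by (cases m) auto
  with assms have s: "a + b + c + d = 2" by (simp add: mdeg_def)
  then have "a \<le> 2" "b \<le> 2" "c \<le> 2" by auto
  then have "(a = 0 \<or> a = 1 \<or> a = 2) \<and> (b = 0 \<or> b = 1 \<or> b = 2) \<and> (c = 0 \<or> c = 1 \<or> c = 2)"
    by auto
  then show ?thesis
    using s unfolding m by (elim conjE disjE) simp_all
qed

lemma mdeg_eq_2_cases:
  assumes "mdeg m = 2"
  obtains i j where "i \<in> {1,2,3,4}" "j \<in> {1,2,3,4}" "i \<le> j" "m = unit_mon i + unit_mon j"
proof -
  have "\<exists>i\<in>{1,2,3,4}. \<exists>j\<in>{1,2,3,4}. i \<le> j \<and> m = unit_mon i + unit_mon j"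
    using mdeg_eq_2_enum[OF assms] by (elim insertE emptyE) (simp_all add: unit_mon_def)
  then show thesis using that by blast
qed

lemma c2_coeff_square: "i \<in> {1,2,3,4} \<Longrightarrow> c2_coeff (unit_mon i + unit_mon i) l = tri (coord l i)"
  by (cases l) (elim insertE emptyE; simp add: unit_mon_def coord_def c2_coeff_tuple)

lemma c2_coeff_mixed:
  "i \<in> {1,2,3,4} \<Longrightarrow> j \<in> {1,2,3,4} \<Longrightarrow> i < j \<Longrightarrow> c2_coeff (unit_mon i + unit_mon j) l = coord l i * coord l j"
  by (cases l) (elim insertE emptyE; simp add: unit_mon_def coord_def c2_coeff_tuple)

lemma c2_coeff_zero: "mdeg m = 2 \<Longrightarrow> c2_coeff m 0 = 0"
  by (drule mdeg_eq_2_enum) (elim insertE emptyE; simp add: zero_prod_def c2_coeff_tuple tri_def)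

lemma coord_add: "coord (l + l') i = coord l i + coord l' i"
  by (cases l; cases l') (simp add: coord_def)

lemma coord_simple_refl: "coord (simple_refl i l) j = coord l j - coord l i * coord (simple_root i) j"
  by (cases l) (simp add: simple_refl_def wsub_def wscale_def coord_def split: prod.splits)

lemma cartan_diag: "i \<in> {1,2,3,4} \<Longrightarrow> coord (simple_root i) i = 2"
  by (auto simp: simple_root_def coord_def)

lemma simple_refl_tuple:
  "simple_refl 1 (a,b,c,d) = (-a, b+a, c, d)"
  "simple_refl 2 (a,b,c,d) = (a+b, -b, c+b, d+b)"
  "simple_refl 3 (a,b,c,d) = (a, b+c, -c, d)"
  "simple_refl 4 (a,b,c,d) = (a, b+d, c, -d)"
  by (simp_all add: simple_refl_def wsub_def wscale_def coord_def simple_root_def)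

lemma simple_refl_involutive: "i \<in> {1,2,3,4} \<Longrightarrow> simple_refl i (simple_refl i l) = l"
  by (cases l) (auto simp: simple_refl_tuple)

lemma simple_refl_weyl: "i \<in> {1,2,3,4} \<Longrightarrow> simple_refl i \<in> weyl"
  using weyl_step[OF weyl_id, of i] by simp

definition weyl_invariant :: "(wt \<Rightarrow> 'a) \<Rightarrow> bool" where
  "weyl_invariant f \<longleftrightarrow> (\<forall>w\<in>weyl. \<forall>l. f (w l) = f l)"

lemma weyl_invariantD: "weyl_invariant f \<Longrightarrow> w \<in> weyl \<Longrightarrow> f (w l) = f l"
  unfolding weyl_invariant_def by blast

lemma weyl_invariantI:
  assumes "\<And>i l. i \<in> {1,2,3,4} \<Longrightarrow> f (simple_refl i l) = f l"
  shows "weyl_invariant f"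
proof -
  have "f (w l) = f l" if "w \<in> weyl" for w l
    using that by (induction arbitrary: l) (simp_all add: assms)
  then show ?thesis unfolding weyl_invariant_def by blast
qed

lemma weyl_invariant_mem:
  assumes "\<And>i x. i \<in> {1,2,3,4} \<Longrightarrow> x \<in> A \<Longrightarrow> simple_refl i x \<in> A"
  shows "weyl_invariant (\<lambda>x. x \<in> A)"
  by (rule weyl_invariantI) (metis assms simple_refl_involutive)

lemma weyl_invariant_zero: "weyl_invariant (\<lambda>l. l = 0)"
proof (rule weyl_invariantI)
  fix i l assume "i \<in> {1::nat,2,3,4}"
  then show "(simple_refl i l = 0) = (l = 0)"
    by (cases l) (auto simp: simple_refl_tuple zero_prod_def)
qed

lemma W_invariant_iff: "W_invariant h \<longleftrightarrow> weyl_invariant (Poly_Mapping.lookup h)"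
  by (simp add: W_invariant_def weyl_invariant_def)

section \<open>Pairing group-ring elements with functions on weights\<close>

definition pairing :: "grpring \<Rightarrow> (wt \<Rightarrow> int) \<Rightarrow> int" where
  "pairing F G = (\<Sum>l\<in>Poly_Mapping.keys F. Poly_Mapping.lookup F l * G l)"

lemma pairing_superset:
  "finite A \<Longrightarrow> Poly_Mapping.keys F \<subseteq> A \<Longrightarrow> pairing F G = (\<Sum>l\<in>A. Poly_Mapping.lookup F l * G l)"
  unfolding pairing_def by (rule sum.mono_neutral_left) (auto simp: in_keys_iff)

lemma pairing_add: "pairing (F + H) G = pairing F G + pairing H G"
proof -
  let ?A = "Poly_Mapping.keys F \<union> Poly_Mapping.keys H"
  have "Poly_Mapping.keys (F + H) \<subseteq> ?A" by (rule keys_add)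
  then show ?thesis
    by (simp add: pairing_superset[of ?A] lookup_add sum.distrib algebra_simps)
qed

lemma pairing_zero [simp]: "pairing 0 G = 0"
  by (simp add: pairing_def)

lemma pairing_diff: "pairing (F - H) G = pairing F G - pairing H G"
  using pairing_add[of "F - H" H G] by simp

lemma pairing_single: "pairing (Poly_Mapping.single l c) G = c * G l"
  by (cases "c = 0") (simp_all add: pairing_def)

lemma pairing_sum: "finite A \<Longrightarrow> pairing (\<Sum>x\<in>A. F x) G = (\<Sum>x\<in>A. pairing (F x) G)"
  by (induction A rule: finite_induct) (simp_all add: pairing_add)

lemma pairing_mult: "pairing (g * h) G = pairing g (\<lambda>x. pairing h (\<lambda>y. G (x + y)))"
proof -
  have expand: "F = (\<Sum>l\<in>Poly_Mapping.keys F. Poly_Mapping.single l (Poly_Mapping.lookup F l))" for F :: grpring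
    by (rule poly_mapping_eqI) (simp add: lookup_sum lookup_single when_def in_keys_iff)
  have gh: "g * h = (\<Sum>x\<in>Poly_Mapping.keys g. \<Sum>y\<in>Poly_Mapping.keys h.
      Poly_Mapping.single (x + y) (Poly_Mapping.lookup g x * Poly_Mapping.lookup h y))"
    by (subst expand[of g], subst expand[of h]) (simp add: sum_product mult_single)
  show ?thesis
    unfolding gh by (simp add: pairing_sum pairing_single) (simp add: pairing_def sum_distrib_left mult.assoc)
qed

lemma pairing_fun_add: "pairing F (\<lambda>l. G l + H l) = pairing F G + pairing F H"
  by (simp add: pairing_def sum.distrib algebra_simps)

lemma pairing_fun_diff: "pairing F (\<lambda>l. G l - H l) = pairing F G - pairing F H"
  by (simp add: pairing_def sum_subtractf algebra_simps)

lemma pairing_fun_scale: "pairing F (\<lambda>l. k * G l) = k * pairing F G"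
  by (simp add: pairing_def sum_distrib_left algebra_simps)

lemma pairing_fun_sum: "pairing F (\<lambda>l. \<Sum>i\<in>I. G i l) = (\<Sum>i\<in>I. pairing F (G i))"
  by (simp add: pairing_def sum_distrib_left sum.swap[of _ I])

lemma pairing_const: "pairing F (\<lambda>_. k) = k * aug F"
  by (simp add: pairing_def aug_def sum_distrib_left mult.commute)

lemma aug_pairing: "aug F = pairing F (\<lambda>_. 1)"
  using pairing_const[of F 1] by simp

lemma pairing_cong: "(\<And>l. l \<in> Poly_Mapping.keys F \<Longrightarrow> G l = G' l) \<Longrightarrow> pairing F G = pairing F G'"
  by (simp add: pairing_def)

lemma pairing_dvd: "(\<And>l. k dvd G l) \<Longrightarrow> k dvd pairing F G"
  unfolding pairing_def by (intro dvd_sum) simp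

lemma c2_eq_pairing: "mdeg m = 2 \<Longrightarrow> c2 F m = pairing F (c2_coeff m)"
  by (simp add: c2_def pairing_def c2_coeff_def agree_deg2D[OF chern_img_agree_deg2])

section \<open>Pairings with W-invariant elements\<close>

text \<open>The invariant quadratic form q = \<onehalf> x^T A x, A the Cartan matrix.\<close>
definition qform :: "mon \<Rightarrow> int" where
  "qform m = (if m \<in> {(2,0,0,0),(0,2,0,0),(0,0,2,0),(0,0,0,2)} then 1
     else if m \<in> {(1,1,0,0),(0,1,1,0),(0,1,0,1)} then -1 else 0)"

lemma qform_unit:
  assumes "i \<in> {1,2,3,4}" "j \<in> {1,2,3,4}" "i \<le> j"
  shows "qform (unit_mon i + unit_mon j) = (if i = j then 1 else coord (simple_root i) j)"
  using assms by (auto simp: qform_def unit_mon_def simple_root_def coord_def)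

context
  fixes h :: grpring
  assumes h: "W_invariant h"
begin

lemma pairing_simple_refl:
  assumes i: "i \<in> {1,2,3,4}"
  shows "pairing h (\<lambda>l. G (simple_refl i l)) = pairing h G"
proof -
  have hs: "Poly_Mapping.lookup h (simple_refl i l) = Poly_Mapping.lookup h l" for l
    using h simple_refl_weyl[OF i] unfolding W_invariant_def by blast
  show ?thesis unfolding pairing_def
    by (rule sum.reindex_bij_witness[of _ "simple_refl i" "simple_refl i"])
      (auto simp: simple_refl_involutive[OF i] hs in_keys_iff)
qed

lemma pairing_weyl: "w \<in> weyl \<Longrightarrow> pairing h (\<lambda>l. G (w l)) = pairing h G"
proof (induction arbitrary: G rule: weyl.induct)
  case (weyl_step w i)
  have "pairing h (\<lambda>l. G (simple_refl i (w l))) = pairing h (\<lambda>l. G (simple_refl i l))"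
    by (rule weyl_step.IH)
  also have "\<dots> = pairing h G"
    by (rule pairing_simple_refl[OF weyl_step.hyps(2)])
  finally show ?case by simp
qed simp

lemma pairing_odd:
  assumes "w \<in> weyl" "\<And>l. G (w l) = - G l"
  shows "pairing h G = 0"
proof -
  have "pairing h G = pairing h (\<lambda>l. - G l)"
    using pairing_weyl[OF assms(1), of G] by (simp add: assms(2))
  also have "\<dots> = - pairing h G"
    using pairing_fun_scale[of h "-1" G] by simp
  finally show ?thesis by simp
qed

lemma pairing_fold_sign:
  fixes e :: "wt \<Rightarrow> int"
  assumes w: "w \<in> weyl" and e: "\<And>l. e (w l) = - e l" and G: "\<And>l. G (w l) = G l"
    and supp: "\<And>l. e l = 0 \<Longrightarrow> G l = 0"
  shows "pairing h G = 2 * pairing h (\<lambda>l. of_bool (e l > 0) * G l)"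
proof -
  let ?H = "\<lambda>l. of_bool (e l > 0) * G l"
  have "G l = ?H l + ?H (w l)" for l
    using supp[of l] by (cases "e l" "0::int" rule: linorder_cases) (simp_all add: e G)
  then have "pairing h G = pairing h ?H + pairing h (\<lambda>l. ?H (w l))"
    by (simp add: pairing_fun_add[symmetric])
  then show ?thesis using pairing_weyl[OF w, of ?H] by simp
qed

lemma pairing_invariant_coord:
  assumes P: "weyl_invariant P" and i: "i \<in> {1,2,3,4}"
  shows "pairing h (\<lambda>l. of_bool (P l) * coord l i) = 0"
  by (rule pairing_odd[OF simple_refl_weyl[OF i]])
    (simp add: weyl_invariantD[OF P simple_refl_weyl[OF i]] coord_simple_refl cartan_diag[OF i])

lemma pairing_coord: "i \<in> {1,2,3,4} \<Longrightarrow> pairing h (\<lambda>l. coord l i) = 0"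
  using pairing_invariant_coord[of "\<lambda>_. True" i] by (simp add: weyl_invariant_def)

lemma pairing_coord_mult:
  assumes i: "i \<in> {1,2,3,4}"
  shows "2 * pairing h (\<lambda>l. coord l i * coord l j) = coord (simple_root i) j * pairing h (\<lambda>l. coord l i ^ 2)"
proof -
  let ?A = "coord (simple_root i) j"
  have "pairing h (\<lambda>l. coord l i * coord l j)
      = pairing h (\<lambda>l. coord (simple_refl i l) i * coord (simple_refl i l) j)"
    by (rule pairing_simple_refl[OF i, symmetric])
  also have "\<dots> = pairing h (\<lambda>l. ?A * coord l i ^ 2 - coord l i * coord l j)"
    by (simp add: coord_simple_refl cartan_diag[OF i] power2_eq_square algebra_simps)
  finally show ?thesis by (simp add: pairing_fun_diff pairing_fun_scale)
qed

lemma pairing_coord_square: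
  assumes i: "i \<in> {1,2,3,4}"
  shows "pairing h (\<lambda>l. coord l i ^ 2) = pairing h (\<lambda>l. coord l 1 ^ 2)"
proof -
  have adjacent: "pairing h (\<lambda>l. coord l i ^ 2) = pairing h (\<lambda>l. coord l j ^ 2)"
    if "i \<in> {1,2,3,4}" "j \<in> {1,2,3,4}" "coord (simple_root i) j = -1" "coord (simple_root j) i = -1" for i j
    using pairing_coord_mult[OF that(1), of j] pairing_coord_mult[OF that(2), of i] that(3,4)
    by (simp add: mult.commute)
  have "pairing h (\<lambda>l. coord l k ^ 2) = pairing h (\<lambda>l. coord l 2 ^ 2)" if "k \<in> {1,2,3,4}" for k
  proof (cases "k = 2")
    case False
    with that have "k \<in> {1,3,4}" by auto
    then have "coord (simple_root k) 2 = -1" "coord (simple_root 2) k = -1"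
      by (auto simp: simple_root_def coord_def)
    then show ?thesis using adjacent[of k 2] that by simp
  qed simp
  from this[OF i] this[of 1] show ?thesis by simp
qed

lemma pairing_c2_coeff:
  assumes m: "mdeg m = 2"
  shows "pairing h (c2_coeff m) = qform m * pairing h (c2_coeff (2,0,0,0))"
proof -
  have tri: "2 * pairing h (\<lambda>l. tri (coord l i)) = pairing h (\<lambda>l. coord l 1 ^ 2)"
    if i: "i \<in> {1,2,3,4}" for i
  proof -
    have "2 * pairing h (\<lambda>l. tri (coord l i)) = pairing h (\<lambda>l. coord l i ^ 2 + coord l i)"
      by (simp add: pairing_fun_scale[symmetric] tri_double power2_eq_square algebra_simps)
    also have "\<dots> = pairing h (\<lambda>l. coord l 1 ^ 2)"
      by (simp add: pairing_fun_add pairing_coord[OF i] pairing_coord_square[OF i])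
    finally show ?thesis .
  qed
  have "unit_mon 1 + unit_mon 1 = (2,0,0,0)"
    by (simp add: unit_mon_def)
  then have "c2_coeff (2,0,0,0) = (\<lambda>l. tri (coord l 1))"
    using c2_coeff_square[of 1] by auto
  then have kappa: "2 * pairing h (c2_coeff (2,0,0,0)) = pairing h (\<lambda>l. coord l 1 ^ 2)"
    using tri[of 1] by simp
  obtain i j where ij: "i \<in> {1,2,3,4}" "j \<in> {1,2,3,4}" "i \<le> j" and m_ij: "m = unit_mon i + unit_mon j"
    using m by (rule mdeg_eq_2_cases)
  show ?thesis
  proof (cases "i = j")
    case True
    then have "m = unit_mon j + unit_mon j" by (simp add: m_ij)
    moreover have "c2_coeff (unit_mon j + unit_mon j) = (\<lambda>l. tri (coord l j))"
      by (simp add: fun_eq_iff c2_coeff_square[OF ij(2)])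
    ultimately show ?thesis
      using tri[OF ij(2)] kappa by (simp add: qform_unit[OF ij(2) ij(2)])
  next
    case False
    then have "i < j" using ij(3) by simp
    then have "c2_coeff m = (\<lambda>l. coord l i * coord l j)"
      by (simp add: m_ij c2_coeff_mixed[OF ij(1,2)] fun_eq_iff)
    then have "2 * pairing h (c2_coeff m) = 2 * (coord (simple_root i) j * pairing h (c2_coeff (2,0,0,0)))"
      using pairing_coord_mult[OF ij(1), of j] pairing_coord_square[OF ij(1)] kappa by simp
    then show ?thesis
      using False by (simp add: m_ij qform_unit[OF ij])
  qed
qed

lemma pairing_c2_coeff_shift:
  assumes h0: "aug h = 0" and m: "mdeg m = 2"
  shows "pairing h (\<lambda>y. c2_coeff m (x + y)) = pairing h (c2_coeff m)"
proof -
  have affine: "pairing h (\<lambda>y. k + G y + c * coord y i + d * coord y j) = pairing h G"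
    if "i \<in> {1,2,3,4}" "j \<in> {1,2,3,4}" for k c d i j G
    by (simp add: pairing_fun_add pairing_fun_scale pairing_const h0 pairing_coord[OF that(1)]
        pairing_coord[OF that(2)])
  obtain i j where ij: "i \<in> {1,2,3,4}" "j \<in> {1,2,3,4}" "i \<le> j" and m_ij: "m = unit_mon i + unit_mon j"
    using m by (rule mdeg_eq_2_cases)
  show ?thesis
  proof (cases "i = j")
    case True
    have "c2_coeff m (x + y) = tri (coord x j) + c2_coeff m y + coord x j * coord y j + 0 * coord y j" for y
      unfolding m_ij True c2_coeff_square[OF ij(2)] by (simp add: coord_add tri_add)
    then have shift: "(\<lambda>y. c2_coeff m (x + y)) = (\<lambda>y. tri (coord x j) + c2_coeff m y + coord x j * coord y j + 0 * coord y j)"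
      by (rule ext)
    show ?thesis unfolding shift by (rule affine[OF ij(2) ij(2)])
  next
    case False
    then have "i < j" using ij(3) by simp
    then have "c2_coeff m (x + y) = coord x i * coord x j + c2_coeff m y
        + coord x j * coord y i + coord x i * coord y j" for y
      by (simp add: m_ij c2_coeff_mixed[OF ij(1,2)] coord_add algebra_simps)
    then have shift: "(\<lambda>y. c2_coeff m (x + y)) = (\<lambda>y. coord x i * coord x j + c2_coeff m y
        + coord x j * coord y i + coord x i * coord y j)"
      by (rule ext)
    show ?thesis unfolding shift by (rule affine[OF ij(1,2)])
  qed
qed

end

section \<open>Orthonormal coordinates and the cosets of the root lattice\<close>

text \<open>Twice the coordinates of a weight in an orthonormal basis \<epsilon>1, \<dots>, \<epsilon>4; the Weyl group acts on
them by permutations and sign changes of pairs.\<close>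
definition eps :: "nat \<Rightarrow> wt \<Rightarrow> int" where
  "eps i l = (case l of (a,b,c,d) \<Rightarrow>
     if i = 1 then 2*a + 2*b + c + d else if i = 2 then 2*b + c + d else if i = 3 then c + d else d - c)"

lemma eps_tuple:
  "eps 1 (a,b,c,d) = 2*a + 2*b + c + d"
  "eps 2 (a,b,c,d) = 2*b + c + d" "eps 3 (a,b,c,d) = c + d" "eps 4 (a,b,c,d) = d - c"
  by (simp_all add: eps_def)

lemma eps_add: "eps i (x + y) = eps i x + eps i y"
  by (cases x; cases y) (simp add: eps_def)

lemma eps_simple_refl:
  "eps 1 (simple_refl 1 l) = eps 2 l" "eps 2 (simple_refl 1 l) = eps 1 l"
  "eps 3 (simple_refl 1 l) = eps 3 l" "eps 4 (simple_refl 1 l) = eps 4 l"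
  "eps 1 (simple_refl 2 l) = eps 1 l" "eps 2 (simple_refl 2 l) = eps 3 l"
  "eps 3 (simple_refl 2 l) = eps 2 l" "eps 4 (simple_refl 2 l) = eps 4 l"
  "eps 1 (simple_refl 3 l) = eps 1 l" "eps 2 (simple_refl 3 l) = eps 2 l"
  "eps 3 (simple_refl 3 l) = eps 4 l" "eps 4 (simple_refl 3 l) = eps 3 l"
  "eps 1 (simple_refl 4 l) = eps 1 l" "eps 2 (simple_refl 4 l) = eps 2 l"
  "eps 3 (simple_refl 4 l) = - eps 4 l" "eps 4 (simple_refl 4 l) = - eps 3 l"
  by (cases l; simp add: simple_refl_tuple eps_tuple algebra_simps)+

definition refl_word :: "nat list \<Rightarrow> wt \<Rightarrow> wt" where
  "refl_word is = foldr (\<lambda>i w. simple_refl i \<circ> w) is id"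

lemma refl_word_weyl: "set is \<subseteq> {1,2,3,4} \<Longrightarrow> refl_word is \<in> weyl"
  by (induction "is") (simp_all add: refl_word_def weyl_id weyl_step)

definition flip12 :: "wt \<Rightarrow> wt" where "flip12 = refl_word [2,3,1,2,4,2,3,1,2,1]"
definition flip23 :: "wt \<Rightarrow> wt" where "flip23 = refl_word [3,2,4,2,3,2]"
definition flip34 :: "wt \<Rightarrow> wt" where "flip34 = refl_word [4,3]"

lemma flips_weyl: "flip12 \<in> weyl" "flip23 \<in> weyl" "flip34 \<in> weyl"
  unfolding flip12_def flip23_def flip34_def by (simp_all add: refl_word_weyl)

lemma eps_flip:
  "eps 1 (flip12 l) = - eps 1 l" "eps 2 (flip12 l) = - eps 2 l"
  "eps 3 (flip12 l) = eps 3 l" "eps 4 (flip12 l) = eps 4 l"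
  "eps 1 (flip23 l) = eps 1 l" "eps 2 (flip23 l) = - eps 2 l"
  "eps 3 (flip23 l) = - eps 3 l" "eps 4 (flip23 l) = eps 4 l"
  "eps 1 (flip34 l) = eps 1 l" "eps 2 (flip34 l) = eps 2 l"
  "eps 3 (flip34 l) = - eps 3 l" "eps 4 (flip34 l) = - eps 4 l"
  by (cases l; simp add: flip12_def flip23_def flip34_def refl_word_def simple_refl_tuple
      eps_tuple algebra_simps)+

text \<open>4(l,l), for the invariant form in which roots have square length 2.\<close>
definition norm4 :: "wt \<Rightarrow> int" where
  "norm4 l = eps 1 l ^ 2 + eps 2 l ^ 2 + eps 3 l ^ 2 + eps 4 l ^ 2"

text \<open>The class of a weight modulo the root lattice: (False, False) is the root lattice,
(False, True) the vector class, and (True, _) the two half-spin classes.\<close>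
definition coset :: "wt \<Rightarrow> bool \<times> bool" where
  "coset l = (case l of (a,b,c,d) \<Rightarrow> (odd (c + d), odd (a + c)))"

lemma coset_add: "coset (x + y) = (fst (coset x) \<noteq> fst (coset y), snd (coset x) \<noteq> snd (coset y))"
  by (cases x; cases y) (simp add: coset_def; presburger)

lemma weyl_invariant_coset: "weyl_invariant coset"
proof (rule weyl_invariantI)
  fix i l assume "i \<in> {1::nat,2,3,4}"
  then show "coset (simple_refl i l) = coset l"
    by (cases l) (auto simp: simple_refl_tuple coset_def; presburger)
qed

lemma weyl_invariant_coset_eq: "weyl_invariant (\<lambda>l. coset l = c)"
  using weyl_invariant_coset by (simp add: weyl_invariant_def)

lemma root_lattice_iff: "l \<in> root_lattice \<longleftrightarrow> coset l = (False, False)"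
proof
  assume "l \<in> root_lattice"
  then obtain c1 c2 c3 c4 where "l = wscale c1 (simple_root 1) + wscale c2 (simple_root 2)
      + wscale c3 (simple_root 3) + wscale c4 (simple_root 4)"
    unfolding root_lattice_def by blast
  then show "coset l = (False, False)"
    by (simp add: wscale_def simple_root_def coset_def; presburger)
next
  assume r: "coset l = (False, False)"
  obtain a b c d where l: "l = (a,b,c,d)" by (cases l) auto
  from r have "even (c + d)" "even (a + c)" by (simp_all add: l coset_def)
  then obtain p q where p: "c + d = 2*p" and q: "a + c = 2*q" by (meson evenE)
  have "l = wscale (a+b+p) (simple_root 1) + wscale (a+2*b+c+d) (simple_root 2)
       + wscale (p+q+b) (simple_root 3) + wscale (q+b+d) (simple_root 4)"
    unfolding l using p q by (simp add: wscale_def simple_root_def algebra_simps)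
  then show "l \<in> root_lattice" unfolding root_lattice_def by blast
qed

text \<open>Used for even e, where it says that e/2 is odd.\<close>
definition twice_odd :: "int \<Rightarrow> bool" where
  "twice_odd e \<longleftrightarrow> e mod 4 = 2"

lemma twice_odd_uminus [simp]: "twice_odd (- e) = twice_odd e"
  unfolding twice_odd_def by presburger

lemma twice_odd_double: "twice_odd (2 * x) \<longleftrightarrow> odd x"
  unfolding twice_odd_def by presburger

lemma twice_odd_nonzero: "twice_odd e \<Longrightarrow> e \<noteq> 0"
  unfolding twice_odd_def by auto

lemma not_twice_odd_zero [simp]: "\<not> twice_odd 0"
  by (simp add: twice_odd_def)

lemma odd_square_dvd: "odd (e::int) \<Longrightarrow> 8 dvd e^2 - 1"
proof -
  assume "odd e"
  then obtain t where t: "e = 2*t + 1" by (rule oddE)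
  have "even (t * (t + 1))" by simp
  then obtain s where "t * (t + 1) = 2 * s" by (rule evenE)
  then have "e^2 - 1 = 8 * s" unfolding t by (simp add: power2_eq_square algebra_simps)
  then show ?thesis by simp
qed

lemma even_square_dvd: "even (e::int) \<Longrightarrow> 16 dvd e^2 - 4 * of_bool (twice_odd e)"
proof -
  assume "even e"
  then obtain t where t: "e = 2*t" by (rule evenE)
  show ?thesis
  proof (cases "odd t")
    case True
    then obtain k where "t^2 - 1 = 8 * k" using odd_square_dvd by blast
    then have "e^2 - 4 = 16 * (2 * k)" by (simp add: t power2_eq_square algebra_simps)
    then show ?thesis using True by (simp add: t twice_odd_double)
  next
    case False
    then have "\<not> twice_odd e" by (simp add: t twice_odd_double)
    moreover obtain s where "t = 2 * s" using False by (auto elim: evenE)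
    then have "e^2 = 16 * s^2" by (simp add: t power2_eq_square)
    ultimately show ?thesis by simp
  qed
qed

definition twice_odd_count :: "wt \<Rightarrow> int" where
  "twice_odd_count l = of_bool (twice_odd (eps 1 l)) + of_bool (twice_odd (eps 2 l))
     + of_bool (twice_odd (eps 3 l)) + of_bool (twice_odd (eps 4 l))"

lemma weyl_invariant_twice_odd_count: "weyl_invariant twice_odd_count"
proof (rule weyl_invariantI)
  fix i l assume "i \<in> {1::nat,2,3,4}"
  then show "twice_odd_count (simple_refl i l) = twice_odd_count l"
    by (auto simp: twice_odd_count_def eps_simple_refl)
qed

lemma odd_count_iff:
  "odd (of_bool (odd x1) + of_bool (odd x2) + of_bool (odd x3) + of_bool (odd x4) :: int)
    \<longleftrightarrow> odd (x1 + x2 + x3 + (x4::int))"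
  by (cases "odd x1"; cases "odd x2"; cases "odd x3"; cases "odd x4") simp_all

lemma eps_odd: "fst (coset l) \<Longrightarrow> i \<in> {1,2,3,4} \<Longrightarrow> odd (eps i l)"
  by (cases l) (auto simp: coset_def eps_tuple; presburger)

lemma eps_even: "\<not> fst (coset l) \<Longrightarrow> even (eps i l)"
  by (cases l) (simp add: coset_def eps_def; presburger)

lemma twice_odd_count_parity:
  assumes "\<not> fst (coset l)"
  shows "odd (twice_odd_count l) \<longleftrightarrow> snd (coset l)"
proof -
  obtain a b c d where l: "l = (a,b,c,d)" by (cases l) auto
  from assms have "even (c + d)" by (simp add: l coset_def)
  then obtain u where u: "c + d = 2*u" by (rule evenE)
  have e: "eps 1 l = 2*(a+b+u)" "eps 2 l = 2*(b+u)" "eps 3 l = 2*u" "eps 4 l = 2*(u-c)"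
    using u by (simp_all add: l eps_tuple algebra_simps)
  have "twice_odd_count l = of_bool (odd (a+b+u)) + of_bool (odd (b+u)) + of_bool (odd u)
      + of_bool (odd (u-c))"
    unfolding twice_odd_count_def e twice_odd_double by (rule refl)
  then have "odd (twice_odd_count l) \<longleftrightarrow> odd ((a+b+u) + (b+u) + u + (u-c))"
    by (simp only: odd_count_iff)
  also have "\<dots> \<longleftrightarrow> odd (a + c)" by presburger
  finally show ?thesis by (simp add: l coset_def)
qed

section \<open>Divisibility by 64\<close>

context
  fixes h :: grpring
  assumes h: "W_invariant h"
begin

lemma pairing_eps_sum:
  assumes P: "weyl_invariant P"
  shows "pairing h (\<lambda>l. of_bool (P l) * (g (eps 1 l) + g (eps 2 l) + g (eps 3 l) + g (eps 4 l)))
    = 4 * pairing h (\<lambda>l. of_bool (P l) * g (eps 1 l))"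
proof -
  have swap: "pairing h (\<lambda>l. of_bool (P l) * g (eps j l)) = pairing h (\<lambda>l. of_bool (P l) * g (eps i l))"
    if i: "i \<in> {1,2,3,4}" and ij: "\<And>l. eps i (simple_refl i l) = eps j l" for i j
  proof -
    have "pairing h (\<lambda>l. of_bool (P l) * g (eps i l))
        = pairing h (\<lambda>l. of_bool (P (simple_refl i l)) * g (eps i (simple_refl i l)))"
      by (rule pairing_simple_refl[OF h i, symmetric])
    also have "\<dots> = pairing h (\<lambda>l. of_bool (P l) * g (eps j l))"
      by (simp add: weyl_invariantD[OF P simple_refl_weyl[OF i]] ij)
    finally show ?thesis ..
  qed
  have "pairing h (\<lambda>l. of_bool (P l) * g (eps 2 l)) = pairing h (\<lambda>l. of_bool (P l) * g (eps 1 l))"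
    "pairing h (\<lambda>l. of_bool (P l) * g (eps 3 l)) = pairing h (\<lambda>l. of_bool (P l) * g (eps 2 l))"
    "pairing h (\<lambda>l. of_bool (P l) * g (eps 4 l)) = pairing h (\<lambda>l. of_bool (P l) * g (eps 3 l))"
    by (rule swap; simp add: eps_simple_refl)+
  then show ?thesis by (simp add: distrib_left pairing_fun_add)
qed

lemma pairing_count_odd_eps:
  assumes P: "weyl_invariant P" and odd: "\<And>l i. P l \<Longrightarrow> i \<in> {1,2,3,4} \<Longrightarrow> odd (eps i l)"
  shows "8 dvd pairing h (\<lambda>l. of_bool (P l))"
proof -
  have nz: "eps 1 l = 0 \<Longrightarrow> \<not> P l" "eps 2 l = 0 \<Longrightarrow> \<not> P l" "eps 3 l = 0 \<Longrightarrow> \<not> P l" for l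
    using odd[of l 1] odd[of l 2] odd[of l 3] by fastforce+
  note inv = weyl_invariantD[OF P flips_weyl(1)] weyl_invariantD[OF P flips_weyl(2)]
    weyl_invariantD[OF P flips_weyl(3)]
  let ?P1 = "\<lambda>l. of_bool (eps 1 l > 0) * of_bool (P l)"
  let ?P2 = "\<lambda>l. of_bool (eps 2 l > 0) * ?P1 l"
  let ?P3 = "\<lambda>l. of_bool (eps 3 l > 0) * ?P2 l"
  have "pairing h (\<lambda>l. of_bool (P l)) = 2 * pairing h ?P1"
    by (rule pairing_fold_sign[OF h flips_weyl(1)]) (simp_all add: eps_flip inv nz)
  moreover have "pairing h ?P1 = 2 * pairing h ?P2"
    by (rule pairing_fold_sign[OF h flips_weyl(2)]) (simp_all add: eps_flip inv nz)
  moreover have "pairing h ?P2 = 2 * pairing h ?P3"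
    by (rule pairing_fold_sign[OF h flips_weyl(3)]) (simp_all add: eps_flip inv nz)
  ultimately show ?thesis by simp
qed

lemma pairing_norm_odd_eps:
  assumes P: "weyl_invariant P" and odd: "\<And>l i. P l \<Longrightarrow> i \<in> {1,2,3,4} \<Longrightarrow> odd (eps i l)"
  shows "64 dvd pairing h (\<lambda>l. of_bool (P l) * (norm4 l - 4))"
proof -
  let ?G = "\<lambda>l. of_bool (P l) * (eps 1 l ^ 2 - 1)"
  have "pairing h (\<lambda>l. of_bool (P l) * (norm4 l - 4))
      = pairing h (\<lambda>l. of_bool (P l) * ((eps 1 l ^ 2 - 1) + (eps 2 l ^ 2 - 1) + (eps 3 l ^ 2 - 1) + (eps 4 l ^ 2 - 1)))"
    by (simp add: norm4_def algebra_simps)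
  also have "\<dots> = 4 * pairing h ?G"
    by (rule pairing_eps_sum[OF P])
  also have "pairing h ?G = 2 * pairing h (\<lambda>l. of_bool (eps 1 l > 0) * ?G l)"
    by (rule pairing_fold_sign[OF h flips_weyl(1)])
      (use odd[of _ 1] in \<open>fastforce simp: eps_flip weyl_invariantD[OF P flips_weyl(1)]\<close>)+
  finally have "pairing h (\<lambda>l. of_bool (P l) * (norm4 l - 4)) = 8 * pairing h (\<lambda>l. of_bool (eps 1 l > 0) * ?G l)"
    by simp
  moreover have "8 dvd pairing h (\<lambda>l. of_bool (eps 1 l > 0) * ?G l)"
    by (rule pairing_dvd) (use odd odd_square_dvd in auto)
  ultimately show ?thesis by auto
qed

lemma pairing_count_three:
  assumes P: "weyl_invariant P"
  shows "8 dvd pairing h (\<lambda>l. of_bool (P l \<and> twice_odd_count l = 3))"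
proof -
  let ?Q = "\<lambda>l. P l \<and> twice_odd_count l = 3"
  let ?G = "\<lambda>l. of_bool (?Q l) * of_bool (\<not> twice_odd (eps 1 l))"
  have Q: "weyl_invariant ?Q"
    using P weyl_invariant_twice_odd_count by (simp add: weyl_invariant_def)
  have "pairing h (\<lambda>l. of_bool (?Q l)) = pairing h (\<lambda>l. of_bool (?Q l) * (of_bool (\<not> twice_odd (eps 1 l))
      + of_bool (\<not> twice_odd (eps 2 l)) + of_bool (\<not> twice_odd (eps 3 l)) + of_bool (\<not> twice_odd (eps 4 l))))"
    by (rule pairing_cong) (auto simp: twice_odd_count_def)
  also have "\<dots> = 4 * pairing h ?G"
    by (rule pairing_eps_sum[OF Q])
  also have "pairing h ?G = 2 * pairing h (\<lambda>l. of_bool (eps 2 l > 0) * ?G l)"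
    by (rule pairing_fold_sign[OF h flips_weyl(2)])
      (simp add: eps_flip, simp add: eps_flip weyl_invariantD[OF P flips_weyl(2)]
        weyl_invariantD[OF weyl_invariant_twice_odd_count flips_weyl(2)],
       simp add: twice_odd_count_def twice_odd_def)
  finally show ?thesis by simp
qed

lemma pairing_count_odd_count:
  assumes P: "weyl_invariant P" and odd: "\<And>l. P l \<Longrightarrow> odd (twice_odd_count l)"
  shows "8 dvd pairing h (\<lambda>l. of_bool (P l))"
proof -
  let ?G = "\<lambda>l. of_bool (P l) * of_bool (twice_odd (eps 1 l))"
  have "(of_bool (P l) :: int) = of_bool (P l) * (of_bool (twice_odd (eps 1 l)) + of_bool (twice_odd (eps 2 l))
      + of_bool (twice_odd (eps 3 l)) + of_bool (twice_odd (eps 4 l))) - 2 * of_bool (P l \<and> twice_odd_count l = 3)" for l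
    using odd[of l] unfolding twice_odd_count_def
    by (cases "P l"; cases "twice_odd (eps 1 l)"; cases "twice_odd (eps 2 l)";
        cases "twice_odd (eps 3 l)"; cases "twice_odd (eps 4 l)") simp_all
  then have "pairing h (\<lambda>l. of_bool (P l)) = pairing h (\<lambda>l. of_bool (P l) * (of_bool (twice_odd (eps 1 l))
      + of_bool (twice_odd (eps 2 l)) + of_bool (twice_odd (eps 3 l)) + of_bool (twice_odd (eps 4 l))))
      - 2 * pairing h (\<lambda>l. of_bool (P l \<and> twice_odd_count l = 3))"
    by (simp add: pairing_fun_diff[symmetric] pairing_fun_scale[symmetric])
  also have "pairing h (\<lambda>l. of_bool (P l) * (of_bool (twice_odd (eps 1 l))
      + of_bool (twice_odd (eps 2 l)) + of_bool (twice_odd (eps 3 l)) + of_bool (twice_odd (eps 4 l))))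
      = 4 * pairing h ?G"
    by (rule pairing_eps_sum[OF P])
  also have "pairing h ?G = 2 * pairing h (\<lambda>l. of_bool (eps 1 l > 0) * ?G l)"
    by (rule pairing_fold_sign[OF h flips_weyl(1)])
      (auto simp: eps_flip weyl_invariantD[OF P flips_weyl(1)] dest: twice_odd_nonzero)
  finally show ?thesis
    using pairing_count_three[OF P] by auto
qed

lemma pairing_norm_odd_count:
  assumes P: "weyl_invariant P" and even: "\<And>l i. P l \<Longrightarrow> even (eps i l)"
    and odd: "\<And>l. P l \<Longrightarrow> odd (twice_odd_count l)"
  shows "64 dvd pairing h (\<lambda>l. of_bool (P l) * (norm4 l - 4))"
proof -
  let ?g = "\<lambda>e. e ^ 2 - 4 * of_bool (twice_odd e)"
  let ?G = "\<lambda>l. of_bool (P l) * ?g (eps 1 l)"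
  have "of_bool (P l) * (norm4 l - 4) = of_bool (P l) * (?g (eps 1 l) + ?g (eps 2 l) + ?g (eps 3 l) + ?g (eps 4 l))
      + 8 * of_bool (P l \<and> twice_odd_count l = 3)" for l
    using odd[of l] unfolding twice_odd_count_def norm4_def
    by (cases "P l"; cases "twice_odd (eps 1 l)"; cases "twice_odd (eps 2 l)";
        cases "twice_odd (eps 3 l)"; cases "twice_odd (eps 4 l)") simp_all
  then have "pairing h (\<lambda>l. of_bool (P l) * (norm4 l - 4))
      = pairing h (\<lambda>l. of_bool (P l) * (?g (eps 1 l) + ?g (eps 2 l) + ?g (eps 3 l) + ?g (eps 4 l)))
      + 8 * pairing h (\<lambda>l. of_bool (P l \<and> twice_odd_count l = 3))"
    by (simp add: pairing_fun_add[symmetric] pairing_fun_scale[symmetric])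
  also have "pairing h (\<lambda>l. of_bool (P l) * (?g (eps 1 l) + ?g (eps 2 l) + ?g (eps 3 l) + ?g (eps 4 l)))
      = 4 * pairing h ?G"
    by (rule pairing_eps_sum[OF P])
  also have "pairing h ?G = 2 * pairing h (\<lambda>l. of_bool (eps 1 l > 0) * ?G l)"
    by (rule pairing_fold_sign[OF h flips_weyl(1)])
      (simp_all add: eps_flip weyl_invariantD[OF P flips_weyl(1)])
  finally have "pairing h (\<lambda>l. of_bool (P l) * (norm4 l - 4))
      = 8 * pairing h (\<lambda>l. of_bool (eps 1 l > 0) * ?G l)
      + 8 * pairing h (\<lambda>l. of_bool (P l \<and> twice_odd_count l = 3))"
    by simp
  moreover have "16 dvd pairing h (\<lambda>l. of_bool (eps 1 l > 0) * ?G l)"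
    by (rule pairing_dvd) (use even even_square_dvd in auto)
  ultimately show ?thesis
    using pairing_count_three[OF P] by (auto elim!: dvdE)
qed

lemma pairing_twice_odd_even:
  assumes P: "weyl_invariant P" and even_count: "\<And>l. P l \<Longrightarrow> even (twice_odd_count l)"
  shows "even (pairing h (\<lambda>l. of_bool (eps 1 l > 0 \<and> P l \<and> twice_odd (eps 1 l))))"
proof -
  let ?F = "\<lambda>l. of_bool (eps 1 l > 0 \<and> P l \<and> twice_odd (eps 1 l)) :: int"
  have "?F l = ?F l * of_bool (twice_odd (eps 2 l)) + ?F l * of_bool (twice_odd (eps 3 l))
      + ?F l * of_bool (twice_odd (eps 4 l))
      - 2 * (?F l * of_bool (twice_odd (eps 2 l) \<and> twice_odd (eps 3 l) \<and> twice_odd (eps 4 l)))" for l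
    using even_count[of l] unfolding twice_odd_count_def
    by (cases "P l"; cases "twice_odd (eps 1 l)"; cases "twice_odd (eps 2 l)";
        cases "twice_odd (eps 3 l)"; cases "twice_odd (eps 4 l)") simp_all
  then have "pairing h ?F = pairing h (\<lambda>l. ?F l * of_bool (twice_odd (eps 2 l)))
      + pairing h (\<lambda>l. ?F l * of_bool (twice_odd (eps 3 l)))
      + pairing h (\<lambda>l. ?F l * of_bool (twice_odd (eps 4 l)))
      - 2 * pairing h (\<lambda>l. ?F l * of_bool (twice_odd (eps 2 l) \<and> twice_odd (eps 3 l) \<and> twice_odd (eps 4 l)))"
    by (simp add: pairing_fun_add[symmetric] pairing_fun_diff[symmetric] pairing_fun_scale[symmetric])
  moreover have "even (pairing h (\<lambda>l. ?F l * of_bool (twice_odd (eps 2 l))))"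
    using pairing_fold_sign[OF h flips_weyl(2), where e = "eps 2" and G = "\<lambda>l. ?F l * of_bool (twice_odd (eps 2 l))"]
    by (simp add: eps_flip weyl_invariantD[OF P flips_weyl(2)])
  moreover have "even (pairing h (\<lambda>l. ?F l * of_bool (twice_odd (eps 3 l))))"
    using pairing_fold_sign[OF h flips_weyl(3), where e = "eps 3" and G = "\<lambda>l. ?F l * of_bool (twice_odd (eps 3 l))"]
    by (simp add: eps_flip weyl_invariantD[OF P flips_weyl(3)])
  moreover have "even (pairing h (\<lambda>l. ?F l * of_bool (twice_odd (eps 4 l))))"
    using pairing_fold_sign[OF h flips_weyl(3), where e = "eps 4" and G = "\<lambda>l. ?F l * of_bool (twice_odd (eps 4 l))"]
    by (simp add: eps_flip weyl_invariantD[OF P flips_weyl(3)])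
  ultimately show ?thesis by simp
qed

lemma pairing_norm_even_count:
  assumes P: "weyl_invariant P" and even: "\<And>l i. P l \<Longrightarrow> even (eps i l)"
    and even_count: "\<And>l. P l \<Longrightarrow> even (twice_odd_count l)"
  shows "64 dvd pairing h (\<lambda>l. of_bool (P l) * norm4 l)"
proof -
  let ?G = "\<lambda>l. of_bool (P l) * eps 1 l ^ 2"
  let ?F = "\<lambda>l. of_bool (eps 1 l > 0 \<and> P l \<and> twice_odd (eps 1 l)) :: int"
  let ?R = "\<lambda>l. of_bool (eps 1 l > 0 \<and> P l) * (eps 1 l ^ 2 - 4 * of_bool (twice_odd (eps 1 l)))"
  have "pairing h (\<lambda>l. of_bool (P l) * norm4 l)
      = pairing h (\<lambda>l. of_bool (P l) * (eps 1 l ^ 2 + eps 2 l ^ 2 + eps 3 l ^ 2 + eps 4 l ^ 2))"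
    by (simp add: norm4_def)
  also have "\<dots> = 4 * pairing h ?G"
    by (rule pairing_eps_sum[OF P])
  also have "pairing h ?G = 2 * pairing h (\<lambda>l. of_bool (eps 1 l > 0) * ?G l)"
    by (rule pairing_fold_sign[OF h flips_weyl(1)]) (simp_all add: eps_flip weyl_invariantD[OF P flips_weyl(1)])
  also have "(\<lambda>l. of_bool (eps 1 l > 0) * ?G l) = (\<lambda>l. 4 * ?F l + ?R l)"
    by (auto simp: fun_eq_iff)
  finally have norm: "pairing h (\<lambda>l. of_bool (P l) * norm4 l) = 32 * pairing h ?F + 8 * pairing h ?R"
    by (simp add: pairing_fun_add pairing_fun_scale)
  have "16 dvd pairing h ?R"
    by (rule pairing_dvd) (use even even_square_dvd in auto)
  then show ?thesis
    using pairing_twice_odd_even[OF P even_count] unfolding norm by (auto elim!: dvdE evenE)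
qed

lemma pairing_invariant_eps:
  assumes P: "weyl_invariant P" and i: "i \<in> {1,2,3,4}"
  shows "pairing h (\<lambda>l. of_bool (P l) * eps i l) = 0"
proof -
  have "i \<in> {1,2} \<or> i \<in> {3,4}" using i by auto
  then show ?thesis
  proof
    assume "i \<in> {1,2}"
    then show ?thesis
      by (intro pairing_odd[OF h flips_weyl(1)]) (auto simp: eps_flip weyl_invariantD[OF P flips_weyl(1)])
  next
    assume "i \<in> {3,4}"
    then show ?thesis
      by (intro pairing_odd[OF h flips_weyl(3)]) (auto simp: eps_flip weyl_invariantD[OF P flips_weyl(3)])
  qed
qed

lemma pairing_coset_count_nonroot:
  assumes "c \<noteq> (False, False)"
  shows "8 dvd pairing h (\<lambda>l. of_bool (coset l = c))"
proof (cases "fst c")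
  case True
  then show ?thesis
    by (intro pairing_count_odd_eps[OF weyl_invariant_coset_eq]) (metis eps_odd)
next
  case False
  with assms have "c = (False, True)" by (cases c) auto
  then show ?thesis
    by (intro pairing_count_odd_count[OF weyl_invariant_coset_eq]) (simp add: twice_odd_count_parity)
qed

lemma pairing_coset_norm_nonroot:
  assumes "c \<noteq> (False, False)"
  shows "64 dvd pairing h (\<lambda>l. of_bool (coset l = c) * (norm4 l - 4))"
proof (cases "fst c")
  case True
  then show ?thesis
    by (intro pairing_norm_odd_eps[OF weyl_invariant_coset_eq]) (metis eps_odd)
next
  case False
  with assms have "c = (False, True)" by (cases c) auto
  then show ?thesis
    by (intro pairing_norm_odd_count[OF weyl_invariant_coset_eq]) (simp_all add: eps_even twice_odd_count_parity)
qed

lemma pairing_coset_norm_root: "64 dvd pairing h (\<lambda>l. of_bool (coset l = (False, False)) * norm4 l)"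
  by (intro pairing_norm_even_count[OF weyl_invariant_coset_eq])
    (simp add: eps_even, metis fst_conv snd_conv twice_odd_count_parity)

lemma pairing_coset_count_root:
  assumes h0: "aug h = 0"
  shows "8 dvd pairing h (\<lambda>l. of_bool (coset l = (False, False)))"
proof -
  have "(\<Sum>c\<in>UNIV. pairing h (\<lambda>l. of_bool (coset l = c))) = pairing h (\<lambda>l. \<Sum>c\<in>UNIV. of_bool (coset l = c))"
    by (rule pairing_fun_sum[symmetric])
  also have "\<dots> = 0"
    by (simp add: pairing_const h0)
  finally have "pairing h (\<lambda>l. of_bool (coset l = (False, False))) = - (pairing h (\<lambda>l. of_bool (coset l = (False, True)))
      + pairing h (\<lambda>l. of_bool (coset l = (True, False))) + pairing h (\<lambda>l. of_bool (coset l = (True, True))))"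
    by (simp add: UNIV_bool UNIV_Times_UNIV[symmetric] del: UNIV_Times_UNIV)
  then show ?thesis
    using pairing_coset_count_nonroot[of "(False, True)"] pairing_coset_count_nonroot[of "(True, False)"]
      pairing_coset_count_nonroot[of "(True, True)"] by simp
qed

end

lemma norm4_mod_8: "8 dvd norm4 l + 4 * of_bool (coset l \<noteq> (False, False))"
proof (cases "fst (coset l)")
  case True
  have "8 dvd eps i l ^ 2 - 1" if "i \<in> {1,2,3,4}" for i
    using eps_odd[OF True that] by (rule odd_square_dvd)
  then obtain k1 k2 k3 k4 where "eps 1 l ^ 2 - 1 = 8 * k1" "eps 2 l ^ 2 - 1 = 8 * k2"
    "eps 3 l ^ 2 - 1 = 8 * k3" "eps 4 l ^ 2 - 1 = 8 * k4"
    by (meson dvdE insertCI)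
  then have "norm4 l + 4 = 8 * (k1 + k2 + k3 + k4 + 1)"
    by (simp add: norm4_def algebra_simps)
  then show ?thesis using True by (cases "coset l") simp
next
  case False
  let ?g = "\<lambda>e. e ^ 2 - 4 * of_bool (twice_odd e)"
  have "16 dvd ?g (eps i l)" for i
    using eps_even[OF False] by (rule even_square_dvd)
  then obtain k1 k2 k3 k4 where "?g (eps 1 l) = 16 * k1" "?g (eps 2 l) = 16 * k2"
    "?g (eps 3 l) = 16 * k3" "?g (eps 4 l) = 16 * k4"
    by (meson dvdE)
  moreover have "even (twice_odd_count l + of_bool (snd (coset l)))"
    using twice_odd_count_parity[OF False] by (cases "snd (coset l)") auto
  then obtain j where "twice_odd_count l + of_bool (snd (coset l)) = 2 * j"
    by (rule evenE)
  ultimately have "norm4 l + 4 * of_bool (snd (coset l)) = 8 * (2 * (k1 + k2 + k3 + k4) + j)"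
    by (simp add: norm4_def twice_odd_count_def algebra_simps)
  then show ?thesis using False by (cases "coset l") simp
qed

text \<open>(\<theta>, l) for the highest root \<theta> = \<omega>2.\<close>
definition highest_root_prod :: "wt \<Rightarrow> int" where
  "highest_root_prod l = coord l 1 + 2 * coord l 2 + coord l 3 + coord l 4"

definition psi :: "wt \<Rightarrow> int" where
  "psi l = 4 * highest_root_prod l + of_bool (l \<in> root_lattice) * norm4 l"

lemma add_mem_root_lattice: "x + y \<in> root_lattice \<longleftrightarrow> coset y = coset x"
  by (auto simp: root_lattice_iff coset_add prod_eq_iff)

context
  fixes h :: grpring
  assumes h: "W_invariant h" and h0: "aug h = 0"
begin

lemma pairing_psi_shift:
  "pairing h (\<lambda>y. psi (x + y)) = norm4 x * pairing h (\<lambda>y. of_bool (coset y = coset x))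
     + pairing h (\<lambda>y. of_bool (coset y = coset x) * norm4 y)"
proof -
  let ?P = "\<lambda>y. coset y = coset x"
  have P: "weyl_invariant ?P" by (rule weyl_invariant_coset_eq)
  have "psi (x + y) = 4 * highest_root_prod x + 4 * highest_root_prod y + norm4 x * of_bool (?P y)
      + of_bool (?P y) * norm4 y + 2 * eps 1 x * (of_bool (?P y) * eps 1 y) + 2 * eps 2 x * (of_bool (?P y) * eps 2 y)
      + 2 * eps 3 x * (of_bool (?P y) * eps 3 y) + 2 * eps 4 x * (of_bool (?P y) * eps 4 y)" for y
    by (simp add: psi_def add_mem_root_lattice highest_root_prod_def coord_add norm4_def eps_add
        power2_eq_square algebra_simps)
  then have "pairing h (\<lambda>y. psi (x + y)) = 4 * highest_root_prod x * aug h + 4 * pairing h highest_root_prod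
      + norm4 x * pairing h (\<lambda>y. of_bool (?P y)) + pairing h (\<lambda>y. of_bool (?P y) * norm4 y)
      + 2 * eps 1 x * pairing h (\<lambda>y. of_bool (?P y) * eps 1 y) + 2 * eps 2 x * pairing h (\<lambda>y. of_bool (?P y) * eps 2 y)
      + 2 * eps 3 x * pairing h (\<lambda>y. of_bool (?P y) * eps 3 y) + 2 * eps 4 x * pairing h (\<lambda>y. of_bool (?P y) * eps 4 y)"
    by (simp add: pairing_fun_add pairing_fun_scale pairing_const)
  moreover have "pairing h highest_root_prod = 0"
    unfolding highest_root_prod_def by (simp add: pairing_fun_add pairing_fun_scale pairing_coord[OF h])
  ultimately show ?thesis
    by (simp add: h0 pairing_invariant_eps[OF h P])
qed

lemma pairing_psi_shift_dvd: "64 dvd pairing h (\<lambda>y. psi (x + y))"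
proof -
  let ?N = "pairing h (\<lambda>y. of_bool (coset y = coset x))"
  show ?thesis
  proof (cases "coset x = (False, False)")
    case True
    obtain k where k: "norm4 x = 8 * k" using norm4_mod_8[of x] True by (auto elim: dvdE)
    obtain j where "?N = 8 * j" using pairing_coset_count_root[OF h h0] True by (auto elim: dvdE)
    then have "norm4 x * ?N = 64 * (k * j)" by (simp add: k)
    then show ?thesis
      using pairing_coset_norm_root[OF h] True by (simp add: pairing_psi_shift)
  next
    case False
    have "pairing h (\<lambda>y. of_bool (coset y = coset x) * (norm4 y - 4))
        = pairing h (\<lambda>y. of_bool (coset y = coset x) * norm4 y - 4 * of_bool (coset y = coset x))"
      by (simp add: algebra_simps)
    also have "\<dots> = pairing h (\<lambda>y. of_bool (coset y = coset x) * norm4 y) - 4 * ?N"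
      by (simp only: pairing_fun_diff pairing_fun_scale)
    finally have shifted: "pairing h (\<lambda>y. of_bool (coset y = coset x) * (norm4 y - 4))
        = pairing h (\<lambda>y. of_bool (coset y = coset x) * norm4 y) - 4 * ?N" .
    have "pairing h (\<lambda>y. psi (x + y)) = (norm4 x + 4) * ?N
        + pairing h (\<lambda>y. of_bool (coset y = coset x) * (norm4 y - 4))"
      unfolding pairing_psi_shift shifted by (simp add: ring_distribs)
    moreover obtain k where k: "norm4 x + 4 = 8 * k" using norm4_mod_8[of x] False by (auto elim: dvdE)
    moreover obtain j where "?N = 8 * j" using pairing_coset_count_nonroot[OF h False] by (auto elim: dvdE)
    ultimately show ?thesis
      using pairing_coset_norm_nonroot[OF h False] by simp
  qed
qed

end

lemma IW_sc_pairing_psi: "F \<in> IW_sc \<Longrightarrow> 64 dvd pairing F psi"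
proof (induction rule: IW_sc.induct)
  case (IW_gen h g)
  then show ?case
    by (simp add: pairing_mult pairing_dvd pairing_psi_shift_dvd)
qed (simp_all add: pairing_add)

lemma IW_sc_pairing_c2_coeff:
  "F \<in> IW_sc \<Longrightarrow> mdeg m = 2 \<Longrightarrow> pairing F (c2_coeff m) = qform m * pairing F (c2_coeff (2,0,0,0))"
proof (induction rule: IW_sc.induct)
  case IW_zero
  then show ?case by simp
next
  case (IW_gen h g)
  have gen: "pairing (g * h) (c2_coeff m') = aug g * pairing h (c2_coeff m')" if "mdeg m' = 2" for m'
    using IW_gen.hyps that by (simp add: pairing_mult pairing_c2_coeff_shift pairing_const)
  have "pairing (g * h) (c2_coeff m) = aug g * (qform m * pairing h (c2_coeff (2,0,0,0)))"
    by (simp add: gen[OF IW_gen.prems] pairing_c2_coeff[OF IW_gen.hyps(1) IW_gen.prems])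
  also have "\<dots> = qform m * pairing (g * h) (c2_coeff (2,0,0,0))"
    by (simp add: gen mdeg_def)
  finally show ?case .
next
  case (IW_add a b)
  then show ?case by (simp add: pairing_add distrib_left)
qed

definition norm_functional :: "(mon \<Rightarrow> int) \<Rightarrow> int" where
  "norm_functional v = 2 * v (2,0,0,0) + 4 * v (0,2,0,0) + 2 * v (0,0,2,0) + 2 * v (0,0,0,2)
     + 2 * v (1,1,0,0) + v (1,0,1,0) + v (1,0,0,1) + 2 * v (0,1,1,0) + 2 * v (0,1,0,1) + v (0,0,1,1)"

lemma norm_functional_c2_coeff: "4 * norm_functional (\<lambda>m. c2_coeff m l) = norm4 l + 4 * highest_root_prod l"
proof -
  obtain a b c d where l: "l = (a,b,c,d)" by (cases l) auto
  show ?thesis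
    using tri_double[of a] tri_double[of b] tri_double[of c] tri_double[of d]
    by (simp add: l norm_functional_def c2_coeff_tuple norm4_def eps_tuple highest_root_prod_def coord_def
        power2_eq_square algebra_simps)
qed

lemma pairing_psi_root_lattice:
  assumes "Poly_Mapping.keys F \<subseteq> root_lattice"
  shows "pairing F psi = 4 * norm_functional (\<lambda>m. pairing F (c2_coeff m))"
proof -
  have "pairing F psi = pairing F (\<lambda>l. 4 * norm_functional (\<lambda>m. c2_coeff m l))"
    using assms by (intro pairing_cong) (auto simp: psi_def norm_functional_c2_coeff)
  then show ?thesis
    by (simp add: norm_functional_def pairing_fun_add pairing_fun_scale)
qed

definition roots :: "wt set" where
  "roots = {(-2,1,0,0),(-1,-1,1,1),(-1,0,-1,1),(-1,0,1,-1),(-1,0,1,1),(-1,1,-1,-1),(-1,1,-1,1),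
    (-1,1,1,-1),(-1,2,-1,-1),(0,-1,0,0),(0,-1,0,2),(0,-1,2,0),(0,1,-2,0),(0,1,0,-2),(0,1,0,0),
    (1,-2,1,1),(1,-1,-1,1),(1,-1,1,-1),(1,-1,1,1),(1,0,-1,-1),(1,0,-1,1),(1,0,1,-1),(1,1,-1,-1),(2,-1,0,0)}"

definition orbit_2w1 :: "wt set" where
  "orbit_2w1 = {(-2,0,0,0),(-2,2,0,0),(0,-2,2,2),(0,0,-2,2),(0,0,2,-2),(0,2,-2,-2),(2,-2,0,0),(2,0,0,0)}"

lemma finite_roots: "finite roots" and finite_orbit_2w1: "finite orbit_2w1"
  by (simp_all add: roots_def orbit_2w1_def)

lemma weyl_invariant_roots: "weyl_invariant (\<lambda>x. x \<in> roots)"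
  by (rule weyl_invariant_mem) (unfold roots_def, elim insertE emptyE; simp add: simple_refl_tuple)

lemma weyl_invariant_orbit_2w1: "weyl_invariant (\<lambda>x. x \<in> orbit_2w1)"
  by (rule weyl_invariant_mem) (unfold orbit_2w1_def, elim insertE emptyE; simp add: simple_refl_tuple)

definition dec_witness :: "int \<Rightarrow> grpring" where
  "dec_witness k = (\<Sum>x\<in>roots. Poly_Mapping.single x k) - (\<Sum>x\<in>orbit_2w1. Poly_Mapping.single x k)"

lemma lookup_dec_witness:
  "Poly_Mapping.lookup (dec_witness k) l = k * of_bool (l \<in> roots) - k * of_bool (l \<in> orbit_2w1)"
  by (simp add: dec_witness_def lookup_minus lookup_sum lookup_single when_def finite_roots finite_orbit_2w1)

lemma W_invariant_dec_witness: "W_invariant (dec_witness k)"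
  using weyl_invariantD[OF weyl_invariant_roots] weyl_invariantD[OF weyl_invariant_orbit_2w1]
  by (simp add: W_invariant_def lookup_dec_witness)

lemma keys_dec_witness: "Poly_Mapping.keys (dec_witness k) \<subseteq> root_lattice"
proof
  fix l assume "l \<in> Poly_Mapping.keys (dec_witness k)"
  then have "l \<in> roots \<union> orbit_2w1" by (auto simp: in_keys_iff lookup_dec_witness)
  then show "l \<in> root_lattice"
    unfolding root_lattice_iff roots_def orbit_2w1_def by (auto simp: coset_def)
qed

lemma pairing_dec_witness:
  "pairing (dec_witness k) G = k * ((\<Sum>x\<in>roots. G x) - (\<Sum>x\<in>orbit_2w1. G x))"
  by (simp add: dec_witness_def pairing_diff pairing_sum finite_roots finite_orbit_2w1 pairing_single
      sum_distrib_left right_diff_distrib)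

lemma pairing_dec_witness_c2_coeff:
  assumes "mdeg m = 2"
  shows "pairing (dec_witness k) (c2_coeff m) = 4 * k * qform m"
  using mdeg_eq_2_enum[OF assms]
  by (elim insertE emptyE)
    (simp_all add: pairing_dec_witness c2_coeff_tuple roots_def orbit_2w1_def tri_def qform_def)

lemma Sdec_subset_Dec: "Sdec \<subseteq> Dec"
proof
  fix v assume "v \<in> Sdec"
  then obtain F where v: "v = c2 F" and keys: "Poly_Mapping.keys F \<subseteq> root_lattice" and F: "F \<in> IW_sc"
    unfolding Sdec_def by blast
  define \<kappa> where "\<kappa> = pairing F (c2_coeff (2,0,0,0))"
  have c2F: "pairing F (c2_coeff m) = qform m * \<kappa>" if "mdeg m = 2" for m
    using IW_sc_pairing_c2_coeff[OF F that] by (simp add: \<kappa>_def)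
  have "pairing F psi = 4 * norm_functional (\<lambda>m. pairing F (c2_coeff m))"
    by (rule pairing_psi_root_lattice[OF keys])
  also have "\<dots> = 16 * \<kappa>"
    by (simp add: norm_functional_def c2F mdeg_def qform_def)
  finally obtain k where k: "\<kappa> = 4 * k"
    using IW_sc_pairing_psi[OF F] by (auto elim!: dvdE)
  have "c2 F = c2 (dec_witness k)"
  proof
    fix m
    show "c2 F m = c2 (dec_witness k) m"
      by (cases "mdeg m = 2") (simp add: c2_eq_pairing c2F pairing_dec_witness_c2_coeff k, simp add: c2_def)
  qed
  moreover have "c2 (dec_witness k) \<in> Dec"
    unfolding Dec_def using keys_dec_witness W_invariant_dec_witness by blast
  ultimately show "v \<in> Dec" by (simp add: v)
qed

lemma IW_sc_diff_aug:
  assumes f: "W_invariant f"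
  shows "f - Poly_Mapping.single 0 (aug f) \<in> IW_sc"
proof -
  let ?f' = "f - Poly_Mapping.single 0 (aug f)"
  have "Poly_Mapping.lookup ?f' l = Poly_Mapping.lookup f l - aug f * of_bool (l = 0)" for l
    by (simp add: lookup_minus lookup_single when_def)
  then have "W_invariant ?f'"
    using f weyl_invariant_zero by (simp add: W_invariant_iff weyl_invariant_def)
  moreover have "aug ?f' = 0"
    by (simp add: aug_pairing pairing_diff pairing_single)
  ultimately have "1 * ?f' \<in> IW_sc" by (rule IW_gen)
  then show ?thesis by simp
qed

lemma Dec_subset_Sdec: "Dec \<subseteq> Sdec"
proof
  fix v assume "v \<in> Dec"
  then obtain f where v: "v = c2 f" and keys: "Poly_Mapping.keys f \<subseteq> root_lattice" and f: "W_invariant f"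
    unfolding Dec_def by blast
  let ?f' = "f - Poly_Mapping.single 0 (aug f)"
  have "Poly_Mapping.keys ?f' \<subseteq> Poly_Mapping.keys f \<union> {0}"
    by (auto simp: in_keys_iff lookup_minus lookup_single when_def split: if_splits)
  moreover have "(0::wt) \<in> root_lattice"
    by (simp add: root_lattice_iff coset_def zero_prod_def)
  ultimately have "Poly_Mapping.keys ?f' \<subseteq> root_lattice"
    using keys by blast
  moreover have "c2 ?f' = c2 f"
  proof
    fix m
    show "c2 ?f' m = c2 f m"
      by (cases "mdeg m = 2") (simp add: c2_eq_pairing pairing_diff pairing_single c2_coeff_zero, simp add: c2_def)
  qed
  ultimately show "v \<in> Sdec"
    using IW_sc_diff_aug[OF f] unfolding Sdec_def v by (metis (mono_tags, lifting) image_eqI mem_Collect_eq)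
qed

theorem corollary10p4:
  shows "Sdec = Dec"
  using Sdec_subset_Dec Dec_subset_Sdec by blast

end
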